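(* Let $S$ be an atomic and simple relation algebra with finitely many atoms, and let $\# : S\to\mathbb{N}\cup\{\infty\}$ satisfy: $\#\bot=0$; $\#x=1$ for every atom $x$; $\#x+\#y=\#(x\sqcup y)+\#(x\sqcap y)$ for all $x,y\in S$; and $\#\top=(\#1)^2$. Then $S$ is atom-rectangular, and hence representable.
   Context: A Stone relation algebra is a structure $(S,\sqcup,\sqcap,\cdot,\overline{\,\cdot\,},{}^{\smile},\bot,\top,1)$ (write $xy$ for $x\cdot y$, $\overline{x}$ for the pseudocomplement, $x^{\smile}$ for the converse) such that: $(S,\sqcup,\sqcap,\bot,\top)$ is a bounded distributive lattice with order $x\sqsubseteq y\iff x\sqcup y=y$; $x\sqcap y=\bot\iff x\sqsubseteq\overline{y}$; $\overline{x}\sqcup\overline{\overline{x}}=\top$; $\cdot$ is associative with two-sided unit $1$, distributes over $\sqcup$ on both sides, and $\bot$ is a zero of $\cdot$; $x^{\smile\smile}=x$, $(xy)^{\smile}=y^{\smile}x^{\smile}$, $(x\sqcup y)^{\smile}=x^{\smile}\sqcup y^{\smile}$; $\overline{\overline{1}}=1$; $\overline{\overline{xy}}=\overline{\overline{x}}\,\overline{\overline{y}}$; $xy\sqcap z\sqsubseteq x(y\sqcap x^{\smile}z)$. A relation algebra is a Stone relation algebra with $\overline{\overline{x}}=x$ for all $x$; it is representable if it is isomorphic to an algebra of binary relations (on some base set) with the usual relational operations. An atom is an element $x\neq\bot$ such that $\bot\neq y\sqsubseteq x$ implies $y=x$. An element $x$ is a rectangle if $x\top x\sqsubseteq x$ and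 simple if $\top x\top=\top$. $S$ is simple if every element other than $\bot$ is simple; atomic if every $x\neq\bot$ has an atom below it; atom-rectangular if every atom is a rectangle. Arithmetic in $\mathbb{N}\cup\{\infty\}$ has $n+\infty=\infty+n=\infty$ and $\infty^2=\infty$. *)

theory Defs
  imports "HOL-Library.Extended_Nat"
begin

record 'a sra =
  ssup :: "'a \<Rightarrow> 'a \<Rightarrow> 'a"
  sinf :: "'a \<Rightarrow> 'a \<Rightarrow> 'a"
  scomp :: "'a \<Rightarrow> 'a \<Rightarrow> 'a"
  spc :: "'a \<Rightarrow> 'a"
  sconv :: "'a \<Rightarrow> 'a"
  sbot :: 'a
  stop :: 'a
  sone :: 'a

definition sle :: "'a sra \<Rightarrow> 'a \<Rightarrow> 'a \<Rightarrow> bool" where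
  "sle S x y \<longleftrightarrow> ssup S x y = y"

definition stone_relation_algebra :: "'a sra \<Rightarrow> bool" where
  "stone_relation_algebra S \<longleftrightarrow>
    \<comment> \<open>bounded distributive lattice\<close>
    (\<forall>x y z. ssup S (ssup S x y) z = ssup S x (ssup S y z)) \<and>
    (\<forall>x y. ssup S x y = ssup S y x) \<and>
    (\<forall>x. ssup S x x = x) \<and>
    (\<forall>x y z. sinf S (sinf S x y) z = sinf S x (sinf S y z)) \<and>
    (\<forall>x y. sinf S x y = sinf S y x) \<and>
    (\<forall>x. sinf S x x = x) \<and>
    (\<forall>x y. ssup S x (sinf S x y) = x) \<and>
    (\<forall>x y. sinf S x (ssup S x y) = x) \<and>
    (\<forall>x y z. sinf S x (ssup S y z) = ssup S (sinf S x y) (sinf S x z)) \<and>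
    (\<forall>x. sle S (sbot S) x) \<and>
    (\<forall>x. sle S x (stop S)) \<and>
    \<comment> \<open>Stone algebra\<close>
    (\<forall>x y. sinf S x y = sbot S \<longleftrightarrow> sle S x (spc S y)) \<and>
    (\<forall>x. ssup S (spc S x) (spc S (spc S x)) = stop S) \<and>
    \<comment> \<open>monoid with zero, distributing over join\<close>
    (\<forall>x y z. scomp S (scomp S x y) z = scomp S x (scomp S y z)) \<and>
    (\<forall>x. scomp S (sone S) x = x) \<and>
    (\<forall>x. scomp S x (sone S) = x) \<and>
    (\<forall>x y z. scomp S x (ssup S y z) = ssup S (scomp S x y) (scomp S x z)) \<and>
    (\<forall>x y z. scomp S (ssup S x y) z = ssup S (scomp S x z) (scomp S y z)) \<and>
    (\<forall>x. scomp S (sbot S) x = sbot S) \<and>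
    (\<forall>x. scomp S x (sbot S) = sbot S) \<and>
    \<comment> \<open>converse\<close>
    (\<forall>x. sconv S (sconv S x) = x) \<and>
    (\<forall>x y. sconv S (scomp S x y) = scomp S (sconv S y) (sconv S x)) \<and>
    (\<forall>x y. sconv S (ssup S x y) = ssup S (sconv S x) (sconv S y)) \<and>
    \<comment> \<open>remaining axioms\<close>
    spc S (spc S (sone S)) = sone S \<and>
    (\<forall>x y. spc S (spc S (scomp S x y)) = scomp S (spc S (spc S x)) (spc S (spc S y))) \<and>
    (\<forall>x y z. sle S (sinf S (scomp S x y) z) (scomp S x (sinf S y (scomp S (sconv S x) z))))"

definition relation_algebra :: "'a sra \<Rightarrow> bool" where
  "relation_algebra S \<longleftrightarrow> stone_relation_algebra S \<and> (\<forall>x. spc S (spc S x) = x)"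

definition is_atom :: "'a sra \<Rightarrow> 'a \<Rightarrow> bool" where
  "is_atom S x \<longleftrightarrow> x \<noteq> sbot S \<and> (\<forall>y. y \<noteq> sbot S \<and> sle S y x \<longrightarrow> y = x)"

definition is_rectangle :: "'a sra \<Rightarrow> 'a \<Rightarrow> bool" where
  "is_rectangle S x \<longleftrightarrow> sle S (scomp S (scomp S x (stop S)) x) x"

definition is_simple_elem :: "'a sra \<Rightarrow> 'a \<Rightarrow> bool" where
  "is_simple_elem S x \<longleftrightarrow> scomp S (scomp S (stop S) x) (stop S) = stop S"

definition simple_algebra :: "'a sra \<Rightarrow> bool" where
  "simple_algebra S \<longleftrightarrow> (\<forall>x. x \<noteq> sbot S \<longrightarrow> is_simple_elem S x)"

definition atomic_algebra :: "'a sra \<Rightarrow> bool" where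
  "atomic_algebra S \<longleftrightarrow> (\<forall>x. x \<noteq> sbot S \<longrightarrow> (\<exists>a. is_atom S a \<and> sle S a x))"

definition atom_rectangular :: "'a sra \<Rightarrow> bool" where
  "atom_rectangular S \<longleftrightarrow> (\<forall>a. is_atom S a \<longrightarrow> is_rectangle S a)"

text \<open>Representable: embeddable (injective homomorphism) into the algebra of
  binary relations on a base set B with unit/top an equivalence relation E on B
  (the usual notion; for simple algebras E can be taken to be B \<times> B).\<close>

definition representable :: "'a sra \<Rightarrow> bool" where
  "representable S \<longleftrightarrow> (\<exists>(B::'a set) (E::('a \<times> 'a) set) (h::'a \<Rightarrow> ('a \<times> 'a) set).
     equiv B E \<and> inj h \<and>
     h (stop S) = E \<and> h (sbot S) = {} \<and> h (sone S) = Id_on B \<and>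
     (\<forall>x y. h (ssup S x y) = h x \<union> h y) \<and>
     (\<forall>x y. h (sinf S x y) = h x \<inter> h y) \<and>
     (\<forall>x y. h (scomp S x y) = h x O h y) \<and>
     (\<forall>x. h (spc S x) = E - h x) \<and>
     (\<forall>x. h (sconv S x) = (h x)\<inverse>))"

end

(*
  Call the atoms below 1 points. By simplicity the element p T q spanned by points p, q is
  nonzero, distinct such elements are disjoint, and every atom a lies below p T q for some
  points p, q below the domain and the codomain of a.
  Additivity makes #x the number of atoms below x, so #T = (#1)^2 says that there are exactly
  as many atoms as pairs of points. Hence each p T q contains exactly one atom, i.e. is an atom,
  so every atom has the form p T q and is therefore a rectangle.
  Conversely, in an atomic simple atom-rectangular algebra the elements p T q are atoms, and
  x |-> {(p, q). p T q <= x} represents the algebra by relations on the set of points.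
*)

theory Submission
  imports Defs "HOL-Library.Disjoint_Sets"
begin

lemma disjoint_family_singletons_if_card_le:
  assumes "finite A" and "disjoint_family_on F I"
    and "\<And>i. i \<in> I \<Longrightarrow> F i \<noteq> {}" and "\<And>i. i \<in> I \<Longrightarrow> F i \<subseteq> A"
    and "card A \<le> card I" and "i \<in> I"
  shows "\<exists>a. F i = {a}"
proof -
  define f where "f j = (SOME a. a \<in> F j)" for j
  have f_mem: "f j \<in> F j" if "j \<in> I" for j
    unfolding f_def using assms(3)[OF that] by (simp add: some_in_eq)
  have "inj_on f I"
    using f_mem assms(2) by (intro inj_onI) (metis IntI disjoint_family_onD empty_iff)
  moreover have f_into: "f ` I \<subseteq> A"
    using f_mem assms(4) by blast
  ultimately have "finite I"
    using assms(1) finite_imageD finite_subset by blast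
  have "card (f ` I) = card I"
    using \<open>inj_on f I\<close> by (rule card_image)
  then have f_onto: "f ` I = A"
    using f_into assms(1,5) by (simp add: card_seteq)
  have "F i \<subseteq> {f i}"
  proof
    fix a assume "a \<in> F i"
    then obtain j where "j \<in> I" "a = f j"
      using assms(4,6) f_onto by blast
    then show "a \<in> {f i}"
      using \<open>a \<in> F i\<close> f_mem assms(2,6) by (metis disjoint_family_onD disjoint_iff_not_equal singletonI)
  qed
  then show ?thesis
    using f_mem assms(6) by blast
qed

locale rel_algebra =
  fixes S :: "'a sra"
  assumes ra: "relation_algebra S"
begin

abbreviation ra_sup (infixl "\<squnion>" 65) where "x \<squnion> y \<equiv> ssup S x y"
abbreviation ra_inf (infixl "\<sqinter>" 70) where "x \<sqinter> y \<equiv> sinf S x y"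
abbreviation ra_comp (infixl "\<cdot>" 75) where "x \<cdot> y \<equiv> scomp S x y"
abbreviation ra_pc where "ra_pc x \<equiv> spc S x"
abbreviation ra_conv ("_\<^sup>\<smile>" [1000] 999) where "x\<^sup>\<smile> \<equiv> sconv S x"
abbreviation ra_bot ("\<bottom>") where "\<bottom> \<equiv> sbot S"
abbreviation ra_top ("\<top>") where "\<top> \<equiv> stop S"
abbreviation ra_one ("\<one>") where "\<one> \<equiv> sone S"
abbreviation ra_le (infix "\<sqsubseteq>" 50) where "x \<sqsubseteq> y \<equiv> sle S x y"

lemma
  shows sup_assoc: "(x \<squnion> y) \<squnion> z = x \<squnion> (y \<squnion> z)"
    and sup_commute: "x \<squnion> y = y \<squnion> x"
    and sup_idem: "x \<squnion> x = x"
    and inf_assoc: "(x \<sqinter> y) \<sqinter> z = x \<sqinter> (y \<sqinter> z)"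
    and inf_commute: "x \<sqinter> y = y \<sqinter> x"
    and sup_inf_absorb: "x \<squnion> (x \<sqinter> y) = x"
    and inf_sup_absorb: "x \<sqinter> (x \<squnion> y) = x"
    and inf_sup_distrib: "x \<sqinter> (y \<squnion> z) = (x \<sqinter> y) \<squnion> (x \<sqinter> z)"
    and bot_least: "\<bottom> \<sqsubseteq> x"
    and top_greatest: "x \<sqsubseteq> \<top>"
    and inf_eq_bot_iff: "x \<sqinter> y = \<bottom> \<longleftrightarrow> x \<sqsubseteq> ra_pc y"
    and sup_pc: "x \<squnion> ra_pc x = \<top>"
    and pc_pc: "ra_pc (ra_pc x) = x"
    and comp_assoc: "(x \<cdot> y) \<cdot> z = x \<cdot> (y \<cdot> z)"
    and one_comp: "\<one> \<cdot> x = x"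
    and comp_one: "x \<cdot> \<one> = x"
    and comp_sup_distl: "x \<cdot> (y \<squnion> z) = x \<cdot> y \<squnion> x \<cdot> z"
    and comp_sup_distr: "(x \<squnion> y) \<cdot> z = x \<cdot> z \<squnion> y \<cdot> z"
    and bot_comp: "\<bottom> \<cdot> x = \<bottom>"
    and comp_bot: "x \<cdot> \<bottom> = \<bottom>"
    and conv_conv: "(x\<^sup>\<smile>)\<^sup>\<smile> = x"
    and conv_comp: "(x \<cdot> y)\<^sup>\<smile> = y\<^sup>\<smile> \<cdot> x\<^sup>\<smile>"
    and conv_sup: "(x \<squnion> y)\<^sup>\<smile> = x\<^sup>\<smile> \<squnion> y\<^sup>\<smile>"
    and dedekind: "x \<cdot> y \<sqinter> z \<sqsubseteq> x \<cdot> (y \<sqinter> x\<^sup>\<smile> \<cdot> z)"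
  using ra unfolding relation_algebra_def stone_relation_algebra_def
  by (metis (no_types))+

lemma le_iff_sup: "x \<sqsubseteq> y \<longleftrightarrow> x \<squnion> y = y"
  by (simp add: sle_def)

sublocale ba: boolean_algebra "\<lambda>x y. x \<sqinter> ra_pc y" ra_pc "(\<sqinter>)" "(\<sqsubseteq>)"
  "\<lambda>x y. x \<sqsubseteq> y \<and> x \<noteq> y" "(\<squnion>)" \<bottom> \<top>
proof unfold_locales
  fix x y z
  show "(x \<sqsubseteq> y \<and> x \<noteq> y) = (x \<sqsubseteq> y \<and> \<not> y \<sqsubseteq> x)"
    by (metis le_iff_sup sup_commute)
  show "x \<sqsubseteq> x"
    by (simp add: le_iff_sup sup_idem)
  show "x \<sqsubseteq> y \<Longrightarrow> y \<sqsubseteq> z \<Longrightarrow> x \<sqsubseteq> z"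
    by (metis le_iff_sup sup_assoc)
  show "x \<sqsubseteq> y \<Longrightarrow> y \<sqsubseteq> x \<Longrightarrow> x = y"
    by (metis le_iff_sup sup_commute)
  show "x \<sqinter> y \<sqsubseteq> x" and "x \<sqinter> y \<sqsubseteq> y"
    by (metis le_iff_sup sup_commute inf_commute sup_inf_absorb)+
  show "x \<sqsubseteq> y \<Longrightarrow> x \<sqsubseteq> z \<Longrightarrow> x \<sqsubseteq> y \<sqinter> z"
    by (metis le_iff_sup sup_commute inf_assoc inf_commute sup_inf_absorb inf_sup_absorb)
  show "x \<sqsubseteq> x \<squnion> y" and "y \<sqsubseteq> x \<squnion> y"
    by (metis le_iff_sup sup_assoc sup_commute sup_idem)+
  show "y \<sqsubseteq> x \<Longrightarrow> z \<sqsubseteq> x \<Longrightarrow> y \<squnion> z \<sqsubseteq> x"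
    by (metis le_iff_sup sup_assoc)
  have "(x \<squnion> y) \<sqinter> (x \<squnion> z) = x \<squnion> (z \<sqinter> x \<squnion> z \<sqinter> y)"
    by (metis inf_sup_distrib inf_commute inf_sup_absorb)
  also have "\<dots> = x \<squnion> y \<sqinter> z"
    by (metis sup_assoc inf_commute sup_inf_absorb)
  finally show "x \<squnion> y \<sqinter> z = (x \<squnion> y) \<sqinter> (x \<squnion> z)" ..
  show "\<bottom> \<sqsubseteq> x" and "x \<sqsubseteq> \<top>"
    by (rule bot_least top_greatest)+
  show "x \<sqinter> ra_pc x = \<bottom>"
    by (simp add: inf_eq_bot_iff le_iff_sup sup_idem pc_pc)
  show "x \<squnion> ra_pc x = \<top>"
    by (rule sup_pc)
qed simp

lemma comp_mono:
  assumes "x \<sqsubseteq> y" and "u \<sqsubseteq> v"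
  shows "x \<cdot> u \<sqsubseteq> y \<cdot> v"
proof -
  have "x \<cdot> u \<sqsubseteq> x \<cdot> v"
    using assms(2) by (metis le_iff_sup comp_sup_distl)
  also have "\<dots> \<sqsubseteq> y \<cdot> v"
    using assms(1) by (metis le_iff_sup comp_sup_distr)
  finally show ?thesis .
qed

lemma conv_mono: "x \<sqsubseteq> y \<Longrightarrow> x\<^sup>\<smile> \<sqsubseteq> y\<^sup>\<smile>"
  by (metis le_iff_sup conv_sup)

lemma conv_le_iff: "x\<^sup>\<smile> \<sqsubseteq> y \<longleftrightarrow> x \<sqsubseteq> y\<^sup>\<smile>"
  by (metis conv_mono conv_conv)

lemma conv_top: "\<top>\<^sup>\<smile> = \<top>"
  by (metis ba.order.antisym top_greatest conv_le_iff)

lemma conv_inf: "(x \<sqinter> y)\<^sup>\<smile> = x\<^sup>\<smile> \<sqinter> y\<^sup>\<smile>"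
proof (rule ba.order.antisym)
  show "(x \<sqinter> y)\<^sup>\<smile> \<sqsubseteq> x\<^sup>\<smile> \<sqinter> y\<^sup>\<smile>"
    by (simp add: conv_mono)
  have "(x\<^sup>\<smile> \<sqinter> y\<^sup>\<smile>)\<^sup>\<smile> \<sqsubseteq> x \<sqinter> y"
    by (metis ba.inf.bounded_iff ba.inf_le1 ba.inf_le2 conv_conv conv_mono)
  then show "x\<^sup>\<smile> \<sqinter> y\<^sup>\<smile> \<sqsubseteq> (x \<sqinter> y)\<^sup>\<smile>"
    by (metis conv_le_iff)
qed

lemma dedekind_right: "y \<cdot> x \<sqinter> z \<sqsubseteq> (y \<sqinter> z \<cdot> x\<^sup>\<smile>) \<cdot> x"
proof -
  have "(y \<cdot> x \<sqinter> z)\<^sup>\<smile> = x\<^sup>\<smile> \<cdot> y\<^sup>\<smile> \<sqinter> z\<^sup>\<smile>"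
    by (simp add: conv_inf conv_comp)
  also have "\<dots> \<sqsubseteq> x\<^sup>\<smile> \<cdot> (y\<^sup>\<smile> \<sqinter> (x\<^sup>\<smile>)\<^sup>\<smile> \<cdot> z\<^sup>\<smile>)"
    by (rule dedekind)
  also have "\<dots> = ((y \<sqinter> z \<cdot> x\<^sup>\<smile>) \<cdot> x)\<^sup>\<smile>"
    by (simp add: conv_inf conv_comp conv_conv)
  finally show ?thesis
    by (metis conv_le_iff conv_conv)
qed

lemma le_comp_conv_comp: "x \<sqsubseteq> x \<cdot> x\<^sup>\<smile> \<cdot> x"
proof -
  have "x = x \<cdot> \<one> \<sqinter> x"
    by (simp add: comp_one)
  also have "\<dots> \<sqsubseteq> x \<cdot> (\<one> \<sqinter> x\<^sup>\<smile> \<cdot> x)"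
    by (rule dedekind)
  also have "\<dots> \<sqsubseteq> x \<cdot> (x\<^sup>\<smile> \<cdot> x)"
    by (intro comp_mono) simp_all
  finally show ?thesis
    by (simp add: comp_assoc)
qed

lemma subid_conv: assumes "p \<sqsubseteq> \<one>" shows "p\<^sup>\<smile> = p"
proof -
  have "p \<sqsubseteq> p \<cdot> p\<^sup>\<smile> \<cdot> p"
    by (rule le_comp_conv_comp)
  also have "\<dots> \<sqsubseteq> \<one> \<cdot> p\<^sup>\<smile> \<cdot> \<one>"
    using assms by (intro comp_mono) simp_all
  finally have "p \<sqsubseteq> p\<^sup>\<smile>"
    by (simp add: one_comp comp_one)
  then show ?thesis
    by (metis ba.order.antisym conv_le_iff)
qed

lemma subid_comp_le_inf: "p \<sqsubseteq> \<one> \<Longrightarrow> q \<sqsubseteq> \<one> \<Longrightarrow> p \<cdot> q \<sqsubseteq> p \<sqinter> q"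
  by (metis ba.le_inf_iff ba.order.refl one_comp comp_one comp_mono)

lemma subid_idem: assumes "p \<sqsubseteq> \<one>" shows "p \<cdot> p = p"
proof (rule ba.order.antisym)
  show "p \<cdot> p \<sqsubseteq> p"
    using subid_comp_le_inf[OF assms assms] by simp
  have "p \<sqsubseteq> p \<cdot> p\<^sup>\<smile> \<cdot> p"
    by (rule le_comp_conv_comp)
  also have "\<dots> \<sqsubseteq> p \<cdot> p \<cdot> \<one>"
    using assms by (intro comp_mono) (simp_all add: subid_conv)
  finally show "p \<sqsubseteq> p \<cdot> p"
    by (simp add: comp_one)
qed

lemma le_nonzero: "x \<sqsubseteq> y \<Longrightarrow> x \<noteq> \<bottom> \<Longrightarrow> y \<noteq> \<bottom>"
  using ba.le_bot by blast

lemma le_dom_comp: "x \<sqsubseteq> (\<one> \<sqinter> x \<cdot> x\<^sup>\<smile>) \<cdot> x"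
  using dedekind_right[of \<one> x x] by (simp add: one_comp)

lemma le_comp_cod: "x \<sqsubseteq> x \<cdot> (\<one> \<sqinter> x\<^sup>\<smile> \<cdot> x)"
  using dedekind[of x \<one> x] by (simp add: comp_one)

lemma comp_nonzero_if_le_cod:
  assumes "q \<sqsubseteq> s\<^sup>\<smile> \<cdot> s" and "q \<noteq> \<bottom>"
  shows "s \<cdot> q \<noteq> \<bottom>"
proof
  assume "s \<cdot> q = \<bottom>"
  have "q = s\<^sup>\<smile> \<cdot> s \<sqinter> q"
    using assms(1) by (simp add: ba.inf.absorb2)
  also have "\<dots> \<sqsubseteq> s\<^sup>\<smile> \<cdot> (s \<sqinter> (s\<^sup>\<smile>)\<^sup>\<smile> \<cdot> q)"
    by (rule dedekind)
  also have "\<dots> = \<bottom>"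
    using \<open>s \<cdot> q = \<bottom>\<close> by (simp add: conv_conv comp_bot)
  finally show False
    using assms(2) ba.bot_unique by blast
qed

lemma comp_nonzero_if_le_dom:
  assumes "q \<sqsubseteq> t \<cdot> t\<^sup>\<smile>" and "q \<noteq> \<bottom>"
  shows "q \<cdot> t \<noteq> \<bottom>"
proof
  assume "q \<cdot> t = \<bottom>"
  have "q = t \<cdot> t\<^sup>\<smile> \<sqinter> q"
    using assms(1) by (simp add: ba.inf.absorb2)
  also have "\<dots> \<sqsubseteq> (t \<sqinter> q \<cdot> (t\<^sup>\<smile>)\<^sup>\<smile>) \<cdot> t\<^sup>\<smile>"
    by (rule dedekind_right)
  also have "\<dots> = \<bottom>"
    using \<open>q \<cdot> t = \<bottom>\<close> by (simp add: conv_conv bot_comp)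
  finally show False
    using assms(2) ba.bot_unique by blast
qed

lemma cod_inf_dom_nonzero:
  assumes "s \<cdot> t \<noteq> \<bottom>"
  shows "(\<one> \<sqinter> s\<^sup>\<smile> \<cdot> s) \<sqinter> (\<one> \<sqinter> t \<cdot> t\<^sup>\<smile>) \<noteq> \<bottom>"
proof
  let ?c = "\<one> \<sqinter> s\<^sup>\<smile> \<cdot> s" and ?d = "\<one> \<sqinter> t \<cdot> t\<^sup>\<smile>"
  assume "?c \<sqinter> ?d = \<bottom>"
  have "s \<cdot> t \<sqsubseteq> (s \<cdot> ?c) \<cdot> (?d \<cdot> t)"
    by (intro comp_mono le_comp_cod le_dom_comp)
  also have "\<dots> = s \<cdot> (?c \<cdot> ?d) \<cdot> t"
    by (simp add: comp_assoc)
  also have "\<dots> \<sqsubseteq> s \<cdot> (?c \<sqinter> ?d) \<cdot> t"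
    by (intro comp_mono ba.order.refl subid_comp_le_inf ba.inf_le1)
  also have "\<dots> = \<bottom>"
    using \<open>?c \<sqinter> ?d = \<bottom>\<close> by (simp add: comp_bot bot_comp)
  finally show False
    using assms ba.bot_unique by blast
qed

lemma atom_nonzero: "is_atom S a \<Longrightarrow> a \<noteq> \<bottom>"
  unfolding is_atom_def by blast

lemma atom_eq_if_le: "is_atom S a \<Longrightarrow> x \<noteq> \<bottom> \<Longrightarrow> x \<sqsubseteq> a \<Longrightarrow> x = a"
  unfolding is_atom_def by blast

lemma atom_le_or_disjoint: "is_atom S a \<Longrightarrow> a \<sqsubseteq> x \<or> a \<sqinter> x = \<bottom>"
  unfolding is_atom_def by (metis ba.inf_le1 ba.inf_le2)

lemma atom_le_pc_iff: "is_atom S a \<Longrightarrow> a \<sqsubseteq> ra_pc x \<longleftrightarrow> \<not> a \<sqsubseteq> x"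
  by (metis ba.inf.absorb1 atom_le_or_disjoint atom_nonzero inf_eq_bot_iff)

lemma atom_le_sup_iff:
  assumes "is_atom S a"
  shows "a \<sqsubseteq> x \<squnion> y \<longleftrightarrow> a \<sqsubseteq> x \<or> a \<sqsubseteq> y"
proof
  assume "a \<sqsubseteq> x \<squnion> y"
  then have split: "a \<sqinter> x \<squnion> a \<sqinter> y = a"
    by (metis ba.inf.absorb1 inf_sup_distrib)
  show "a \<sqsubseteq> x \<or> a \<sqsubseteq> y"
  proof (cases "a \<sqsubseteq> y")
    case False
    then have "a \<sqinter> y = \<bottom>"
      using atom_le_or_disjoint[OF assms] by blast
    with split have "a \<sqinter> x = a"
      by simp
    then show ?thesis
      using ba.inf.absorb_iff1 by blast
  qed simp
qed (meson ba.le_supI1 ba.le_supI2)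

lemma comp_top_comp_le_if_below_dom_cod:
  assumes "p \<sqsubseteq> a \<cdot> a\<^sup>\<smile>" and "q \<sqsubseteq> a\<^sup>\<smile> \<cdot> a"
  shows "p \<cdot> \<top> \<cdot> q \<sqsubseteq> a \<cdot> \<top> \<cdot> a"
proof -
  have "p \<cdot> \<top> \<cdot> q \<sqsubseteq> (a \<cdot> a\<^sup>\<smile>) \<cdot> \<top> \<cdot> (a\<^sup>\<smile> \<cdot> a)"
    using assms by (intro comp_mono ba.order.refl)
  also have "\<dots> = a \<cdot> (a\<^sup>\<smile> \<cdot> \<top> \<cdot> a\<^sup>\<smile>) \<cdot> a"
    by (simp add: comp_assoc)
  also have "\<dots> \<sqsubseteq> a \<cdot> \<top> \<cdot> a"
    by (intro comp_mono ba.order.refl top_greatest)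
  finally show ?thesis .
qed

end

locale atomic_simple_rel_algebra = rel_algebra +
  assumes atomic: "atomic_algebra S"
    and simple: "simple_algebra S"
begin

definition atoms_below :: "'a \<Rightarrow> 'a set" where
  "atoms_below x = {a. is_atom S a \<and> a \<sqsubseteq> x}"

definition points :: "'a set" where
  "points = atoms_below \<one>"

lemma exists_atom_below: "x \<noteq> \<bottom> \<Longrightarrow> \<exists>a. is_atom S a \<and> a \<sqsubseteq> x"
  using atomic unfolding atomic_algebra_def by blast

lemma le_if_atoms_below_subset:
  assumes "atoms_below x \<subseteq> atoms_below y"
  shows "x \<sqsubseteq> y"
proof (rule ccontr)
  assume "\<not> x \<sqsubseteq> y"
  then have "x \<sqinter> ra_pc y \<noteq> \<bottom>"
    using inf_eq_bot_iff pc_pc by metis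
  then obtain a where a: "is_atom S a" "a \<sqsubseteq> x \<sqinter> ra_pc y"
    using exists_atom_below by blast
  then have "a \<in> atoms_below y" and "a \<sqsubseteq> ra_pc y"
    using assms unfolding atoms_below_def by auto
  then show False
    using a(1) atom_le_pc_iff unfolding atoms_below_def by blast
qed

lemma eq_if_atoms_below_singleton:
  assumes "atoms_below x = {a}"
  shows "x = a"
proof (rule ba.order.antisym)
  show "a \<sqsubseteq> x"
    using assms unfolding atoms_below_def by blast
  show "x \<sqsubseteq> a"
    using assms by (intro le_if_atoms_below_subset) (auto simp: atoms_below_def)
qed

lemma top_comp_top: "x \<noteq> \<bottom> \<Longrightarrow> \<top> \<cdot> x \<cdot> \<top> = \<top>"
  using simple unfolding simple_algebra_def is_simple_elem_def by simp

lemma pointD: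
  assumes "p \<in> points"
  shows "is_atom S p" "p \<sqsubseteq> \<one>" "p \<noteq> \<bottom>" "p\<^sup>\<smile> = p" "p \<cdot> p = p" "p \<cdot> (p \<cdot> x) = p \<cdot> x"
  using assms atom_nonzero subid_conv subid_idem unfolding points_def atoms_below_def
  by (auto simp flip: comp_assoc)

lemma point_comp_point_distinct:
  assumes "p \<in> points" "q \<in> points" "p \<noteq> q"
  shows "p \<cdot> q = \<bottom>"
proof -
  have "p \<sqinter> q = \<bottom>"
    using assms atom_le_or_disjoint atom_eq_if_le pointD by metis
  then show ?thesis
    using subid_comp_le_inf[OF pointD(2)[OF assms(1)] pointD(2)[OF assms(2)]] ba.bot_unique by simp
qed

lemma point_rect_nonzero:
  assumes "p \<in> points" "q \<in> points"
  shows "p \<cdot> \<top> \<cdot> q \<noteq> \<bottom>"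
proof
  assume rect_bot: "p \<cdot> \<top> \<cdot> q = \<bottom>"
  have "\<top> = \<top> \<cdot> p \<cdot> \<top>"
    using assms(1) by (simp add: top_comp_top pointD(3))
  also have "\<dots> = \<top> \<cdot> p \<cdot> (\<top> \<cdot> q \<cdot> \<top>)"
    using assms(2) by (simp add: top_comp_top pointD(3))
  also have "\<dots> = \<top> \<cdot> (p \<cdot> \<top> \<cdot> q) \<cdot> \<top>"
    by (simp add: comp_assoc)
  also have "\<dots> = \<bottom>"
    using rect_bot by (simp add: bot_comp comp_bot)
  finally show False
    using pointD(3)[OF assms(1)] ba.bot_unique top_greatest by metis
qed

lemma point_rects_disjoint:
  assumes "p \<in> points" "q \<in> points" "p' \<in> points" "q' \<in> points" "(p, q) \<noteq> (p', q')"
  shows "p \<cdot> \<top> \<cdot> q \<sqinter> p' \<cdot> \<top> \<cdot> q' = \<bottom>"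
proof (cases "p = p'")
  case False
  have "p \<cdot> (\<top> \<cdot> q) \<sqinter> p' \<cdot> \<top> \<cdot> q' \<sqsubseteq> p \<cdot> (\<top> \<cdot> q \<sqinter> p\<^sup>\<smile> \<cdot> (p' \<cdot> \<top> \<cdot> q'))"
    by (rule dedekind)
  also have "p\<^sup>\<smile> \<cdot> (p' \<cdot> \<top> \<cdot> q') = (p \<cdot> p') \<cdot> \<top> \<cdot> q'"
    using pointD(4)[OF assms(1)] by (simp add: comp_assoc)
  also have "\<dots> = \<bottom>"
    using point_comp_point_distinct[OF assms(1,3) False] by (simp add: bot_comp)
  finally show ?thesis
    by (simp add: comp_assoc comp_bot ba.bot_unique)
next
  case True
  then have "q' \<noteq> q"
    using assms(5) by auto
  have "p \<cdot> \<top> \<cdot> q \<sqinter> p' \<cdot> \<top> \<cdot> q' \<sqsubseteq> (p \<cdot> \<top> \<sqinter> (p' \<cdot> \<top> \<cdot> q') \<cdot> q\<^sup>\<smile>) \<cdot> q"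
    by (rule dedekind_right)
  also have "(p' \<cdot> \<top> \<cdot> q') \<cdot> q\<^sup>\<smile> = p' \<cdot> \<top> \<cdot> (q' \<cdot> q)"
    using pointD(4)[OF assms(2)] by (simp add: comp_assoc)
  also have "\<dots> = \<bottom>"
    using point_comp_point_distinct[OF assms(4,2) \<open>q' \<noteq> q\<close>] by (simp add: comp_bot)
  finally show ?thesis
    by (simp add: bot_comp ba.bot_unique)
qed

lemma comp_nonzero_via_point:
  assumes "s \<cdot> t \<noteq> \<bottom>"
  obtains q where "q \<in> points" "s \<cdot> q \<noteq> \<bottom>" "q \<cdot> t \<noteq> \<bottom>"
proof -
  obtain q where q: "is_atom S q" "q \<sqsubseteq> (\<one> \<sqinter> s\<^sup>\<smile> \<cdot> s) \<sqinter> (\<one> \<sqinter> t \<cdot> t\<^sup>\<smile>)"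
    using exists_atom_below cod_inf_dom_nonzero[OF assms] by blast
  then have "q \<in> points" "q \<sqsubseteq> s\<^sup>\<smile> \<cdot> s" "q \<sqsubseteq> t \<cdot> t\<^sup>\<smile>"
    unfolding points_def atoms_below_def by auto
  then show thesis
    using that comp_nonzero_if_le_cod comp_nonzero_if_le_dom atom_nonzero[OF q(1)] by blast
qed

lemma atom_between_points:
  assumes "is_atom S a"
  obtains p q where "p \<in> points" "q \<in> points" "p \<sqsubseteq> a \<cdot> a\<^sup>\<smile>" "q \<sqsubseteq> a\<^sup>\<smile> \<cdot> a" "a = p \<cdot> a \<cdot> q"
proof -
  have "a \<noteq> \<bottom>"
    using assms by (rule atom_nonzero)
  then have "\<one> \<sqinter> a \<cdot> a\<^sup>\<smile> \<noteq> \<bottom>" and "\<one> \<sqinter> a\<^sup>\<smile> \<cdot> a \<noteq> \<bottom>"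
    using le_dom_comp[of a] le_comp_cod[of a] ba.bot_unique by (metis bot_comp, metis comp_bot)
  then obtain p q where p: "is_atom S p" "p \<sqsubseteq> \<one> \<sqinter> a \<cdot> a\<^sup>\<smile>"
    and q: "is_atom S q" "q \<sqsubseteq> \<one> \<sqinter> a\<^sup>\<smile> \<cdot> a"
    using exists_atom_below by metis
  then have points: "p \<in> points" "q \<in> points"
    unfolding points_def atoms_below_def by auto
  have "p \<cdot> a = a"
  proof (rule atom_eq_if_le[OF assms])
    show "p \<cdot> a \<noteq> \<bottom>"
      using p comp_nonzero_if_le_dom atom_nonzero by auto
    show "p \<cdot> a \<sqsubseteq> a"
      using comp_mono[OF pointD(2)[OF points(1)] ba.order.refl] by (simp add: one_comp)
  qed
  moreover have "a \<cdot> q = a"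
  proof (rule atom_eq_if_le[OF assms])
    show "a \<cdot> q \<noteq> \<bottom>"
      using q comp_nonzero_if_le_cod atom_nonzero by auto
    show "a \<cdot> q \<sqsubseteq> a"
      using comp_mono[OF ba.order.refl pointD(2)[OF points(2)]] by (simp add: comp_one)
  qed
  ultimately show thesis
    using that points p(2) q(2) by auto
qed

lemma point_rects_eq_if_common_atom:
  assumes "is_atom S a" "p \<in> points" "q \<in> points" "a \<sqsubseteq> p \<cdot> \<top> \<cdot> q"
    and "p' \<in> points" "q' \<in> points" "a \<sqsubseteq> p' \<cdot> \<top> \<cdot> q'"
  shows "p' = p \<and> q' = q"
proof (rule ccontr)
  assume "\<not> (p' = p \<and> q' = q)"
  then have "p \<cdot> \<top> \<cdot> q \<sqinter> p' \<cdot> \<top> \<cdot> q' = \<bottom>"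
    using point_rects_disjoint[OF assms(2,3,5,6)] by blast
  moreover have "a \<sqsubseteq> p \<cdot> \<top> \<cdot> q \<sqinter> p' \<cdot> \<top> \<cdot> q'"
    using assms(4,7) by (rule ba.le_infI)
  ultimately show False
    using atom_nonzero[OF assms(1)] ba.bot_unique by simp
qed

lemma atom_eq_point_rect:
  assumes point_rect_atom: "\<And>p q. p \<in> points \<Longrightarrow> q \<in> points \<Longrightarrow> is_atom S (p \<cdot> \<top> \<cdot> q)"
    and "is_atom S a"
  obtains p q where "p \<in> points" "q \<in> points" "a = p \<cdot> \<top> \<cdot> q"
proof -
  obtain p q where pq: "p \<in> points" "q \<in> points" "a = p \<cdot> a \<cdot> q"
    using atom_between_points[OF assms(2)] by blast
  have "a \<sqsubseteq> p \<cdot> \<top> \<cdot> q"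
    by (subst pq(3)) (intro comp_mono ba.order.refl top_greatest)
  then have "a = p \<cdot> \<top> \<cdot> q"
    using atom_eq_if_le[OF point_rect_atom[OF pq(1,2)]] atom_nonzero[OF assms(2)] by blast
  then show thesis
    using that pq(1,2) by blast
qed

lemma atom_rectangular_iff_point_rects_atoms:
  "atom_rectangular S \<longleftrightarrow> (\<forall>p \<in> points. \<forall>q \<in> points. is_atom S (p \<cdot> \<top> \<cdot> q))"
proof
  assume rect: "atom_rectangular S"
  show "\<forall>p \<in> points. \<forall>q \<in> points. is_atom S (p \<cdot> \<top> \<cdot> q)"
  proof (intro ballI)
    fix p q assume pq: "p \<in> points" "q \<in> points"
    obtain b where b: "is_atom S b" "b \<sqsubseteq> p \<cdot> \<top> \<cdot> q"
      using exists_atom_below point_rect_nonzero[OF pq] by blast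
    obtain p' q' where pq': "p' \<in> points" "q' \<in> points" "p' \<sqsubseteq> b \<cdot> b\<^sup>\<smile>" "q' \<sqsubseteq> b\<^sup>\<smile> \<cdot> b"
      and "b = p' \<cdot> b \<cdot> q'"
      by (rule atom_between_points[OF b(1)])
    have "p' \<cdot> \<top> \<cdot> q' \<sqsubseteq> b \<cdot> \<top> \<cdot> b"
      using pq'(3,4) by (rule comp_top_comp_le_if_below_dom_cod)
    also have "\<dots> \<sqsubseteq> b"
      using rect b(1) unfolding atom_rectangular_def is_rectangle_def by blast
    finally have "b = p' \<cdot> \<top> \<cdot> q'"
      using point_rect_nonzero[OF pq'(1,2)] atom_eq_if_le[OF b(1)] by blast
    then have "p' = p \<and> q' = q"
      using point_rects_eq_if_common_atom[OF b(1) pq b(2) pq'(1,2)] by simp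
    with b \<open>b = p' \<cdot> \<top> \<cdot> q'\<close> show "is_atom S (p \<cdot> \<top> \<cdot> q)"
      by simp
  qed
next
  assume "\<forall>p \<in> points. \<forall>q \<in> points. is_atom S (p \<cdot> \<top> \<cdot> q)"
  then have point_rect_atom: "\<And>p q. p \<in> points \<Longrightarrow> q \<in> points \<Longrightarrow> is_atom S (p \<cdot> \<top> \<cdot> q)"
    by blast
  show "atom_rectangular S"
    unfolding atom_rectangular_def is_rectangle_def
  proof (intro allI impI)
    fix a assume "is_atom S a"
    then obtain p q where "a = p \<cdot> \<top> \<cdot> q"
      using atom_eq_point_rect[OF point_rect_atom] by blast
    moreover have "p \<cdot> (\<top> \<cdot> q \<cdot> \<top> \<cdot> p \<cdot> \<top>) \<cdot> q \<sqsubseteq> p \<cdot> \<top> \<cdot> q"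
      by (intro comp_mono ba.order.refl top_greatest)
    ultimately show "a \<cdot> \<top> \<cdot> a \<sqsubseteq> a"
      by (simp add: comp_assoc)
  qed
qed

lemma atoms_below_inf_pc_atom:
  assumes "is_atom S a"
  shows "atoms_below (x \<sqinter> ra_pc a) = atoms_below x - {a}"
  using assms atom_le_pc_iff atom_eq_if_le atom_nonzero unfolding atoms_below_def
  by (auto simp: ba.le_inf_iff)

lemma count_eq_card_atoms_below:
  fixes cnt :: "'a \<Rightarrow> enat"
  assumes "finite {a. is_atom S a}"
    and cnt_bot: "cnt \<bottom> = 0"
    and cnt_atom: "\<And>a. is_atom S a \<Longrightarrow> cnt a = 1"
    and cnt_modular: "\<And>x y. cnt x + cnt y = cnt (x \<squnion> y) + cnt (x \<sqinter> y)"
  shows "cnt x = enat (card (atoms_below x))"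
proof -
  have "cnt x = enat (card A)" if "finite A" "atoms_below x = A" for A x
    using that
  proof (induction A arbitrary: x rule: finite_induct)
    case empty
    then have "x = \<bottom>"
      using le_if_atoms_below_subset[of x \<bottom>] ba.bot_unique by simp
    then show ?case
      using cnt_bot by (simp add: zero_enat_def)
  next
    case (insert a A)
    then have a: "is_atom S a" "a \<sqsubseteq> x"
      unfolding atoms_below_def by auto
    define y where "y = x \<sqinter> ra_pc a"
    have "cnt y = enat (card A)"
      using insert atoms_below_inf_pc_atom[OF a(1)] unfolding y_def by (intro insert.IH) auto
    moreover have "y \<squnion> a = x"
      unfolding y_def using a(2) by (simp add: ba.sup_inf_distrib2 ba.sup.absorb1)
    moreover have "y \<sqinter> a = \<bottom>"
      unfolding y_def by (simp add: ba.inf_assoc)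
    ultimately have "cnt x = enat (card A) + 1"
      using cnt_modular[of y a] cnt_bot cnt_atom[OF a(1)] by simp
    then show ?case
      using insert by (simp add: one_enat_def)
  qed
  moreover have "finite (atoms_below x)"
    using assms(1) by (rule finite_subset[rotated]) (auto simp: atoms_below_def)
  ultimately show ?thesis
    by blast
qed

lemma point_rect_atom_if_card_atoms_le:
  assumes "finite {a. is_atom S a}" and "card {a. is_atom S a} \<le> card points ^ 2"
    and "p \<in> points" "q \<in> points"
  shows "is_atom S (p \<cdot> \<top> \<cdot> q)"
proof -
  define F where "F pq = atoms_below (fst pq \<cdot> \<top> \<cdot> snd pq)" for pq
  have "disjoint_family_on F (points \<times> points)"
  proof (unfold disjoint_family_on_def, intro ballI impI equals0I)
    fix i j b
    assume "i \<in> points \<times> points" "j \<in> points \<times> points" "i \<noteq> j" "b \<in> F i \<inter> F j"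
    then show False
      using point_rects_eq_if_common_atom[of b "fst i" "snd i" "fst j" "snd j"]
      unfolding F_def atoms_below_def by (auto simp: prod_eq_iff)
  qed
  moreover have "F pq \<noteq> {}" if "pq \<in> points \<times> points" for pq
  proof -
    have "fst pq \<cdot> \<top> \<cdot> snd pq \<noteq> \<bottom>"
      using that point_rect_nonzero by (auto simp: mem_Times_iff)
    then show ?thesis
      using exists_atom_below unfolding F_def atoms_below_def by blast
  qed
  moreover have "F pq \<subseteq> {a. is_atom S a}" for pq
    unfolding F_def atoms_below_def by auto
  moreover have "card {a. is_atom S a} \<le> card (points \<times> points)"
    using assms(2) by (simp add: card_cartesian_product power2_eq_square)
  moreover have "(p, q) \<in> points \<times> points"
    using assms(3,4) by simp
  ultimately have "\<exists>b. F (p, q) = {b}"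
    by (rule disjoint_family_singletons_if_card_le[OF assms(1)])
  then obtain b where b: "atoms_below (p \<cdot> \<top> \<cdot> q) = {b}"
    unfolding F_def by auto
  then have "p \<cdot> \<top> \<cdot> q = b"
    by (rule eq_if_atoms_below_singleton)
  with b show ?thesis
    unfolding atoms_below_def by auto
qed

lemma atom_rectangular_if_count:
  fixes cnt :: "'a \<Rightarrow> enat"
  assumes "finite {a. is_atom S a}"
    and "cnt \<bottom> = 0"
    and "\<And>a. is_atom S a \<Longrightarrow> cnt a = 1"
    and "\<And>x y. cnt x + cnt y = cnt (x \<squnion> y) + cnt (x \<sqinter> y)"
    and cnt_top: "cnt \<top> = (cnt \<one>)\<^sup>2"
  shows "atom_rectangular S"
proof -
  have "atoms_below \<top> = {a. is_atom S a}"
    unfolding atoms_below_def by (simp add: top_greatest)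
  then have "cnt \<top> = enat (card {a. is_atom S a})" and "cnt \<one> = enat (card points)"
    unfolding points_def using count_eq_card_atoms_below[OF assms(1-4)] by simp_all
  then have "card {a. is_atom S a} = card points ^ 2"
    using cnt_top by (simp flip: of_nat_eq_enat)
  then show ?thesis
    using point_rect_atom_if_card_atoms_le[OF assms(1)] atom_rectangular_iff_point_rects_atoms by simp
qed

end

locale atom_rectangular_rel_algebra = atomic_simple_rel_algebra +
  assumes atom_rectangular: "atom_rectangular S"
begin

lemma point_rect_atom: "p \<in> points \<Longrightarrow> q \<in> points \<Longrightarrow> is_atom S (p \<cdot> \<top> \<cdot> q)"
  using atom_rectangular atom_rectangular_iff_point_rects_atoms by blast

lemma point_rect_le_iff:
  assumes "p \<in> points" "q \<in> points"
  shows "p \<cdot> \<top> \<cdot> q \<sqsubseteq> x \<longleftrightarrow> p \<cdot> x \<cdot> q \<noteq> \<bottom>"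
proof
  assume "p \<cdot> \<top> \<cdot> q \<sqsubseteq> x"
  have "p \<cdot> \<top> \<cdot> q = (p \<cdot> p) \<cdot> \<top> \<cdot> (q \<cdot> q)"
    using assms by (simp only: pointD(5))
  also have "\<dots> = p \<cdot> (p \<cdot> \<top> \<cdot> q) \<cdot> q"
    by (simp only: comp_assoc)
  also have "\<dots> \<sqsubseteq> p \<cdot> x \<cdot> q"
    using \<open>p \<cdot> \<top> \<cdot> q \<sqsubseteq> x\<close> by (intro comp_mono ba.order.refl)
  finally show "p \<cdot> x \<cdot> q \<noteq> \<bottom>"
    using point_rect_nonzero[OF assms] by (rule le_nonzero)
next
  assume "p \<cdot> x \<cdot> q \<noteq> \<bottom>"
  moreover have "p \<cdot> x \<cdot> q \<sqsubseteq> p \<cdot> \<top> \<cdot> q"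
    by (intro comp_mono ba.order.refl top_greatest)
  ultimately have "p \<cdot> x \<cdot> q = p \<cdot> \<top> \<cdot> q"
    by (rule atom_eq_if_le[OF point_rect_atom[OF assms]])
  moreover have "p \<cdot> x \<cdot> q \<sqsubseteq> \<one> \<cdot> x \<cdot> \<one>"
    by (intro comp_mono ba.order.refl pointD(2)[OF assms(1)] pointD(2)[OF assms(2)])
  ultimately show "p \<cdot> \<top> \<cdot> q \<sqsubseteq> x"
    by (simp add: one_comp comp_one)
qed

lemma point_rect_le_comp_iff:
  assumes "p \<in> points" "r \<in> points"
  shows "p \<cdot> \<top> \<cdot> r \<sqsubseteq> x \<cdot> y \<longleftrightarrow> (\<exists>q \<in> points. p \<cdot> \<top> \<cdot> q \<sqsubseteq> x \<and> q \<cdot> \<top> \<cdot> r \<sqsubseteq> y)"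
proof
  assume "p \<cdot> \<top> \<cdot> r \<sqsubseteq> x \<cdot> y"
  then have "(p \<cdot> x) \<cdot> (y \<cdot> r) \<noteq> \<bottom>"
    using point_rect_le_iff[OF assms] by (simp add: comp_assoc)
  then obtain q where q: "q \<in> points" "p \<cdot> x \<cdot> q \<noteq> \<bottom>" "q \<cdot> (y \<cdot> r) \<noteq> \<bottom>"
    by (rule comp_nonzero_via_point)
  then have "p \<cdot> \<top> \<cdot> q \<sqsubseteq> x" and "q \<cdot> \<top> \<cdot> r \<sqsubseteq> y"
    using point_rect_le_iff[OF assms(1) q(1)] point_rect_le_iff[OF q(1) assms(2)]
    by (simp_all add: comp_assoc)
  with q(1) show "\<exists>q \<in> points. p \<cdot> \<top> \<cdot> q \<sqsubseteq> x \<and> q \<cdot> \<top> \<cdot> r \<sqsubseteq> y"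
    by blast
next
  assume "\<exists>q \<in> points. p \<cdot> \<top> \<cdot> q \<sqsubseteq> x \<and> q \<cdot> \<top> \<cdot> r \<sqsubseteq> y"
  then obtain q where q: "q \<in> points" "p \<cdot> \<top> \<cdot> q \<sqsubseteq> x" "q \<cdot> \<top> \<cdot> r \<sqsubseteq> y"
    by blast
  have "p \<cdot> \<top> \<cdot> r = p \<cdot> (\<top> \<cdot> q \<cdot> \<top>) \<cdot> r"
    using q(1) by (simp add: top_comp_top pointD(3))
  also have "\<dots> = (p \<cdot> \<top> \<cdot> q) \<cdot> (q \<cdot> \<top> \<cdot> r)"
    using q(1) by (simp add: comp_assoc pointD(6))
  also have "\<dots> \<sqsubseteq> x \<cdot> y"
    using q(2,3) by (rule comp_mono)
  finally show "p \<cdot> \<top> \<cdot> r \<sqsubseteq> x \<cdot> y" .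
qed

definition rep :: "'a \<Rightarrow> ('a \<times> 'a) set" where
  "rep x = {(p, q). p \<in> points \<and> q \<in> points \<and> p \<cdot> \<top> \<cdot> q \<sqsubseteq> x}"

lemma rep_top: "rep \<top> = points \<times> points"
  unfolding rep_def by (auto simp: top_greatest)

lemma rep_bot: "rep \<bottom> = {}"
  unfolding rep_def using point_rect_nonzero ba.le_bot by blast

lemma rep_one: "rep \<one> = Id_on points"
proof -
  have "p \<cdot> \<top> \<cdot> q \<sqsubseteq> \<one> \<longleftrightarrow> p = q" if "p \<in> points" "q \<in> points" for p q
  proof -
    have "p \<cdot> \<top> \<cdot> q \<sqsubseteq> \<one> \<longleftrightarrow> p \<cdot> q \<noteq> \<bottom>"
      using point_rect_le_iff[OF that] by (simp add: comp_one)
    also have "\<dots> \<longleftrightarrow> p = q"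
      using point_comp_point_distinct[OF that] pointD(3,5)[OF that(1)] by auto
    finally show ?thesis .
  qed
  then show ?thesis
    unfolding rep_def by (auto simp: Id_on_def)
qed

lemma rep_sup: "rep (x \<squnion> y) = rep x \<union> rep y"
  unfolding rep_def using atom_le_sup_iff[OF point_rect_atom] by auto

lemma rep_inf: "rep (x \<sqinter> y) = rep x \<inter> rep y"
  unfolding rep_def by auto

lemma rep_pc: "rep (ra_pc x) = points \<times> points - rep x"
  unfolding rep_def using atom_le_pc_iff[OF point_rect_atom] by auto

lemma rep_conv: "rep (x\<^sup>\<smile>) = (rep x)\<inverse>"
proof -
  have "(p \<cdot> \<top> \<cdot> q)\<^sup>\<smile> = q \<cdot> \<top> \<cdot> p" if "p \<in> points" "q \<in> points" for p q
    using that by (simp add: conv_comp conv_top comp_assoc pointD(4))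
  then have "p \<cdot> \<top> \<cdot> q \<sqsubseteq> x\<^sup>\<smile> \<longleftrightarrow> q \<cdot> \<top> \<cdot> p \<sqsubseteq> x" if "p \<in> points" "q \<in> points" for p q
    using conv_le_iff[of "p \<cdot> \<top> \<cdot> q" x] that by simp
  then show ?thesis
    unfolding rep_def by auto
qed

lemma rep_comp: "rep (x \<cdot> y) = rep x O rep y"
  unfolding rep_def using point_rect_le_comp_iff by auto

lemma inj_rep: "inj rep"
proof (rule injI)
  have "atoms_below x \<subseteq> atoms_below y" if "rep x = rep y" for x y
  proof
    fix a assume "a \<in> atoms_below x"
    then obtain p q where "p \<in> points" "q \<in> points" "a = p \<cdot> \<top> \<cdot> q" "a \<sqsubseteq> x"
      using atom_eq_point_rect[OF point_rect_atom] unfolding atoms_below_def by blast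
    then show "a \<in> atoms_below y"
      using that point_rect_atom unfolding rep_def atoms_below_def by blast
  qed
  then show "rep x = rep y \<Longrightarrow> x = y" for x y
    by (intro ba.order.antisym le_if_atoms_below_subset) auto
qed

lemma representable_by_rep: "representable S"
proof -
  have "equiv points (points \<times> points)"
    by (auto simp: equiv_def refl_on_def sym_def trans_def)
  then show ?thesis
    unfolding representable_def
    using inj_rep rep_top rep_bot rep_one rep_sup rep_inf rep_comp rep_pc rep_conv by blast
qed

end

theorem representable_if_atom_rectangular:
  assumes "relation_algebra S" "atomic_algebra S" "simple_algebra S" "atom_rectangular S"
  shows "representable S"
proof -
  interpret atom_rectangular_rel_algebra S
    using assms by unfold_locales
  show ?thesis
    by (rule representable_by_rep)
qed

theorem mainTheorem8:
  fixes S :: "'a sra" and cnt :: "'a \<Rightarrow> enat"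
  assumes "relation_algebra S"
    and "atomic_algebra S"
    and "simple_algebra S"
    and "finite {x. is_atom S x}"
    and "cnt (sbot S) = 0"
    and "\<And>x. is_atom S x \<Longrightarrow> cnt x = 1"
    and "\<And>x y. cnt x + cnt y = cnt (ssup S x y) + cnt (sinf S x y)"
    and "cnt (stop S) = (cnt (sone S))\<^sup>2"
  shows "atom_rectangular S \<and> representable S"
proof -
  interpret atomic_simple_rel_algebra S
    using assms(1-3) by unfold_locales
  have "atom_rectangular S"
    using assms(4-8) by (rule atom_rectangular_if_count)
  moreover have "representable S"
    using assms(1-3) \<open>atom_rectangular S\<close> by (rule representable_if_atom_rectangular)
  ultimately show ?thesis ..
qed

end
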